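(* In the univariate contact-tracing model (described in the context), if $\alpha>\beta>0$, then for every $T\in\mathbb{N}$, every probability distribution $D$ on $\{0,1,2,\dots\}$ and every $p_T\in(0,1]$, the policy that at every step queries a node of largest recency present in the frontier is optimal.
   Context: Univariate model. Fix $T\in\mathbb{N}$, a probability distribution $D$ on $\{0,1,2,\dots\}$, constants $p_T\in(0,1]$, $\alpha\ge 0$, and a discount parameter $\beta>0$. Every node has a recency $h\in\{0,1,\dots,T\}$. Each node (index case or child of an infected node) of recency $h$ is infected independently with probability $p(h)=p_T e^{-\alpha(T-h)}$. If a node of recency $h$ is infected, then for each $j\in\{0,\dots,h-1\}$ it has $Z_j\sim D$ children of recency $j$, all counts independent across $j$ and across nodes and independent of infection statuses. Contact tracing: at step $t=0$ the frontier is a given finite multiset of index cases with known recencies. At each step $t=0,1,2,\dots$ while the frontier is nonempty, the tracer selects one frontier node and queries it, removing it from the frontier. The query reveals its infection status; if it is infected and has recency $h$, benefit $e^{-\beta(h+t)}$ is collected and its children (with their recencies) are added to the frontier; otherwise benefit $0$ is collected and nothing is added. Nodes of the same recency are indistinguishable before being queried, so a policy is a (possibly history-dependent) rule choosing at each step which recency present in the frontier to query. A policy is optimal if for every initial frontier it maximizes the expected total collected benefit over all policies. *)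

theory Defs
  imports "HOL-Probability.Probability"
begin

text \<open>Recencies are naturals; a frontier is a
multiset of recencies. A history records, for each past step, the queried recency
and the revealed outcome: None = not infected, Some C = infected with children C.\<close>

type_synonym hist = "(nat \<times> nat multiset option) list"

text \<open>A (history-dependent) policy sees the initial frontier, the history so far and
the current frontier (the latter is determined by the former two), and names a
recency to query.\<close>
type_synonym policy = "nat multiset \<Rightarrow> hist \<Rightarrow> nat multiset \<Rightarrow> nat"

definition infp :: "real \<Rightarrow> real \<Rightarrow> nat \<Rightarrow> nat \<Rightarrow> real" where
  "infp \<alpha> pT T h = pT * exp (- \<alpha> * (real T - real h))"

text \<open>Distribution of the children multiset of an infected node of recency h:
Z_j ~ D children of recency j, independently, for each j < h.\<close>
primrec kids :: "nat pmf \<Rightarrow> nat \<Rightarrow> nat multiset pmf" where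
  "kids D 0 = return_pmf {#}"
| "kids D (Suc h) =
     bind_pmf (kids D h) (\<lambda>M. map_pmf (\<lambda>z. M + replicate_mset z h) D)"

text \<open>The recency actually queried: the policy's choice if present in the frontier;
an (irrelevant) default otherwise, so that every function is a legal policy.\<close>
definition qchoice :: "nat \<Rightarrow> nat multiset \<Rightarrow> nat" where
  "qchoice r F = (if r \<in># F then r else Max_mset F)"

text \<open>Expected benefit collected during the next N steps, when the history is H
(so the current step is t = length H) and the current frontier is F.\<close>
primrec val :: "real \<Rightarrow> real \<Rightarrow> real \<Rightarrow> nat \<Rightarrow> nat pmf \<Rightarrow> policy \<Rightarrow> nat multiset
    \<Rightarrow> nat \<Rightarrow> hist \<Rightarrow> nat multiset \<Rightarrow> ennreal" where
  "val \<alpha> \<beta> pT T D pol F0 0 H F = 0"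
| "val \<alpha> \<beta> pT T D pol F0 (Suc N) H F =
    (if F = {#} then 0 else
      (let h = qchoice (pol F0 H F) F; t = length H; p = infp \<alpha> pT T h in
        ennreal p *
          (ennreal (exp (- \<beta> * (real h + real t)))
           + (\<integral>\<^sup>+ C. val \<alpha> \<beta> pT T D pol F0 N (H @ [(h, Some C)]) (F - {#h#} + C)
                 \<partial>measure_pmf (kids D h)))
        + ennreal (1 - p) * val \<alpha> \<beta> pT T D pol F0 N (H @ [(h, None)]) (F - {#h#})))"

definition total :: "real \<Rightarrow> real \<Rightarrow> real \<Rightarrow> nat \<Rightarrow> nat pmf \<Rightarrow> policy \<Rightarrow> nat multiset \<Rightarrow> ennreal" where
  "total \<alpha> \<beta> pT T D pol F0 = (SUP N. val \<alpha> \<beta> pT T D pol F0 N [] F0)"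

definition optimal :: "real \<Rightarrow> real \<Rightarrow> real \<Rightarrow> nat \<Rightarrow> nat pmf \<Rightarrow> policy \<Rightarrow> bool" where
  "optimal \<alpha> \<beta> pT T D pol \<longleftrightarrow>
     (\<forall>F0. (\<forall>h\<in>#F0. h \<le> T) \<longrightarrow>
        (\<forall>pol'. total \<alpha> \<beta> pT T D pol' F0 \<le> total \<alpha> \<beta> pT T D pol F0))"

definition greedy :: policy where
  "greedy F0 H F = Max_mset F"

end

theory Submission
  imports Defs
begin

text \<open>Compare any policy with the finite-horizon Bellman values \<open>opt_value\<close>, which
  dominate it, and show by induction on the horizon that greedy attains them. The inductive
  step is an exchange argument: querying a recency \<open>h\<close> below the maximum \<open>m\<close> cannot
  produce nodes of recency \<open>\<ge> m\<close>, so by induction greedy queries \<open>m\<close> next, and swapping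
  these two queries leaves the continuation unchanged (the two children sets are independent)
  while only exchanging the time stamps of the immediate rewards. Since \<open>\<alpha> > \<beta>\<close>, the
  expected reward \<open>p(h) * exp (- \<beta> * (h + t))\<close> is increasing in \<open>h\<close>, and delaying it
  by one step multiplies it by \<open>exp (- \<beta>)\<close>; hence collecting the larger one first is better.\<close>

lemma nn_integral_measure_pmf_swap:
  "(\<integral>\<^sup>+a. \<integral>\<^sup>+b. f a b \<partial>measure_pmf B \<partial>measure_pmf A) =
   (\<integral>\<^sup>+b. \<integral>\<^sup>+a. f a b \<partial>measure_pmf A \<partial>measure_pmf B)"
proof -
  have "(\<integral>\<^sup>+a. \<integral>\<^sup>+b. f a b \<partial>measure_pmf B \<partial>measure_pmf A) = (\<integral>\<^sup>+x. f (fst x) (snd x) \<partial>pair_pmf A B)"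
    by (simp add: nn_integral_pair_pmf')
  also have "\<dots> = (\<integral>\<^sup>+x. f (snd x) (fst x) \<partial>pair_pmf B A)"
    by (subst pair_commute_pmf) (simp add: case_prod_unfold)
  also have "\<dots> = (\<integral>\<^sup>+b. \<integral>\<^sup>+a. f a b \<partial>measure_pmf A \<partial>measure_pmf B)"
    by (simp add: nn_integral_pair_pmf')
  finally show ?thesis .
qed

lemma nn_integral_measure_pmf_affine:
  "(\<integral>\<^sup>+x. a * (b + f x) + c * g x \<partial>measure_pmf M) =
     a * b + a * (\<integral>\<^sup>+x. f x \<partial>measure_pmf M) + c * (\<integral>\<^sup>+x. g x \<partial>measure_pmf M)"
  by (simp add: nn_integral_add nn_integral_cmult distrib_left measure_pmf.emeasure_space_1)

lemma set_pmf_kids_less: "C \<in> set_pmf (kids D h) \<Longrightarrow> x \<in># C \<Longrightarrow> x < h"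
proof (induction h arbitrary: C)
  case 0
  then show ?case by simp
next
  case (Suc h)
  then show ?case by (fastforce split: if_splits intro: less_SucI)
qed

locale contact_tracing =
  fixes \<alpha> \<beta> pT :: real and T :: nat and D :: "nat pmf"
  assumes beta_less_alpha: "\<beta> < \<alpha>" and beta_pos: "0 < \<beta>"
    and pT_pos: "0 < pT" and pT_le_1: "pT \<le> 1"
begin

lemma infp_nonneg: "0 \<le> infp \<alpha> pT T h"
  unfolding infp_def using pT_pos by simp

lemma infp_le_1:
  assumes "h \<le> T"
  shows "infp \<alpha> pT T h \<le> 1"
proof -
  have "exp (- \<alpha> * (real T - real h)) \<le> 1"
    using assms beta_less_alpha beta_pos by simp
  then show ?thesis
    unfolding infp_def using pT_pos pT_le_1 by (simp add: mult_le_one)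
qed

definition reward :: "nat \<Rightarrow> nat \<Rightarrow> real" where
  "reward h t = infp \<alpha> pT T h * exp (- \<beta> * (real h + real t))"

lemma reward_mono:
  assumes "h \<le> m"
  shows "reward h t \<le> reward m t"
proof -
  have "(\<alpha> - \<beta>) * real h \<le> (\<alpha> - \<beta>) * real m"
    using assms beta_less_alpha by (intro mult_left_mono) auto
  then have "- \<alpha> * (real T - real h) - \<beta> * (real h + real t)
      \<le> - \<alpha> * (real T - real m) - \<beta> * (real m + real t)"
    by (simp add: algebra_simps)
  then show ?thesis
    unfolding reward_def infp_def using pT_pos by (simp add: mult.assoc flip: exp_add)
qed

lemma reward_Suc: "reward h (Suc t) = exp (- \<beta>) * reward h t"
  unfolding reward_def by (simp add: algebra_simps flip: exp_add)

lemma reward_interchange: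
  assumes "h \<le> m"
  shows "reward h t + reward m (Suc t) \<le> reward m t + reward h (Suc t)"
proof -
  have "(1 - exp (- \<beta>)) * reward h t \<le> (1 - exp (- \<beta>)) * reward m t"
    using reward_mono[OF assms] beta_pos by (intro mult_left_mono) auto
  then show ?thesis
    unfolding reward_Suc by (simp add: algebra_simps)
qed

definition query_value :: "(nat multiset \<Rightarrow> ennreal) \<Rightarrow> nat \<Rightarrow> nat multiset \<Rightarrow> nat \<Rightarrow> ennreal" where
  "query_value V t F h = ennreal (infp \<alpha> pT T h) *
      (ennreal (exp (- \<beta> * (real h + real t))) + (\<integral>\<^sup>+C. V (F - {#h#} + C) \<partial>measure_pmf (kids D h)))
    + ennreal (1 - infp \<alpha> pT T h) * V (F - {#h#})"

primrec opt_value :: "nat \<Rightarrow> nat \<Rightarrow> nat multiset \<Rightarrow> ennreal" where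
  "opt_value 0 t F = 0"
| "opt_value (Suc N) t F =
    (if F = {#} then 0 else Max (query_value (opt_value N (Suc t)) t F ` set_mset F))"

lemma query_value_mono:
  assumes "V (F - {#h#}) \<le> V' (F - {#h#})"
    and "\<And>C. C \<in> set_pmf (kids D h) \<Longrightarrow> V (F - {#h#} + C) \<le> V' (F - {#h#} + C)"
  shows "query_value V t F h \<le> query_value V' t F h"
  unfolding query_value_def using assms
  by (intro add_mono mult_left_mono nn_integral_mono_AE) (auto simp: AE_measure_pmf_iff)

lemma query_value_cong:
  assumes "V (F - {#h#}) = V' (F - {#h#})"
    and "\<And>C. C \<in> set_pmf (kids D h) \<Longrightarrow> V (F - {#h#} + C) = V' (F - {#h#} + C)"
  shows "query_value V t F h = query_value V' t F h"
  using assms by (intro antisym query_value_mono) auto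

lemma query_value_zero: "query_value (\<lambda>_. 0) t F h = ennreal (reward h t)"
  unfolding query_value_def reward_def by (simp add: ennreal_mult' infp_nonneg)

lemma query_value_le_opt_value:
  "h \<in># F \<Longrightarrow> query_value (opt_value N (Suc t)) t F h \<le> opt_value (Suc N) t F"
  by auto

lemma val_le_opt_value: "val \<alpha> \<beta> pT T D pol F0 N H F \<le> opt_value N (length H) F"
proof (induction N arbitrary: H F)
  case 0
  then show ?case by simp
next
  case (Suc N)
  show ?case
  proof (cases "F = {#}")
    case True
    then show ?thesis by simp
  next
    case False
    define h where "h = qchoice (pol F0 H F) F"
    have "h \<in># F"
      using False unfolding h_def qchoice_def by auto
    have IH: "val \<alpha> \<beta> pT T D pol F0 N (H @ [x]) F' \<le> opt_value N (Suc (length H)) F'" for x F'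
      using Suc.IH[of "H @ [x]"] by simp
    have "val \<alpha> \<beta> pT T D pol F0 (Suc N) H F \<le> query_value (opt_value N (Suc (length H))) (length H) F h"
      using False unfolding query_value_def
      by (simp add: Let_def flip: h_def) (intro add_mono mult_left_mono nn_integral_mono IH; simp)
    also have "\<dots> \<le> opt_value (Suc N) (length H) F"
      using \<open>h \<in># F\<close> by (rule query_value_le_opt_value)
    finally show ?thesis .
  qed
qed

text \<open>Expected continuation value after querying \<open>a\<close> and then \<open>b\<close> from
  \<open>add_mset a (add_mset b G)\<close>.\<close>
definition value_after_pair :: "(nat multiset \<Rightarrow> ennreal) \<Rightarrow> nat \<Rightarrow> nat \<Rightarrow> nat multiset \<Rightarrow> ennreal" where
  "value_after_pair V a b G =
     ennreal (infp \<alpha> pT T a) * ennreal (infp \<alpha> pT T b) *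
       (\<integral>\<^sup>+C. \<integral>\<^sup>+C'. V (G + C + C') \<partial>measure_pmf (kids D b) \<partial>measure_pmf (kids D a))
   + ennreal (infp \<alpha> pT T a) * ennreal (1 - infp \<alpha> pT T b) * (\<integral>\<^sup>+C. V (G + C) \<partial>measure_pmf (kids D a))
   + ennreal (1 - infp \<alpha> pT T a) * ennreal (infp \<alpha> pT T b) * (\<integral>\<^sup>+C. V (G + C) \<partial>measure_pmf (kids D b))
   + ennreal (1 - infp \<alpha> pT T a) * ennreal (1 - infp \<alpha> pT T b) * V G"

lemma value_after_pair_commute: "value_after_pair V a b G = value_after_pair V b a G"
proof -
  have "(\<integral>\<^sup>+C. \<integral>\<^sup>+C'. V (G + C + C') \<partial>measure_pmf (kids D b) \<partial>measure_pmf (kids D a)) =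
        (\<integral>\<^sup>+C. \<integral>\<^sup>+C'. V (G + C + C') \<partial>measure_pmf (kids D a) \<partial>measure_pmf (kids D b))"
    by (subst nn_integral_measure_pmf_swap) (simp add: ac_simps)
  then show ?thesis
    unfolding value_after_pair_def by (simp add: ac_simps)
qed

lemma query_value_pair:
  assumes "a \<le> T"
  shows "query_value (\<lambda>F. query_value V (Suc t) F b) t (add_mset a (add_mset b G)) a =
    ennreal (reward a t + reward b (Suc t)) + value_after_pair V a b G"
proof -
  define pa qa pb qb where "pa = ennreal (infp \<alpha> pT T a)" and "qa = ennreal (1 - infp \<alpha> pT T a)"
    and "pb = ennreal (infp \<alpha> pT T b)" and "qb = ennreal (1 - infp \<alpha> pT T b)"
  define ea eb where "ea = ennreal (exp (- \<beta> * (real a + real t)))"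
    and "eb = ennreal (exp (- \<beta> * (real b + real (Suc t))))"
  define Ja Jb I where "Ja = (\<integral>\<^sup>+C. V (G + C) \<partial>measure_pmf (kids D a))"
    and "Jb = (\<integral>\<^sup>+C. V (G + C) \<partial>measure_pmf (kids D b))"
    and "I = (\<integral>\<^sup>+C. \<integral>\<^sup>+C'. V (G + C + C') \<partial>measure_pmf (kids D b) \<partial>measure_pmf (kids D a))"
  have infected: "(\<integral>\<^sup>+C. query_value V (Suc t) (add_mset b G + C) b \<partial>measure_pmf (kids D a)) =
      pb * eb + pb * I + qb * Ja"
    unfolding query_value_def I_def Ja_def pb_def qb_def eb_def
    by (simp add: nn_integral_measure_pmf_affine)
  have healthy: "query_value V (Suc t) (add_mset b G) b = pb * eb + pb * Jb + qb * V G"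
    unfolding query_value_def Jb_def pb_def qb_def eb_def by (simp add: distrib_left)
  have "pa + qa = 1"
    unfolding pa_def qa_def using infp_nonneg infp_le_1[OF assms] by (simp flip: ennreal_plus)
  have "query_value (\<lambda>F. query_value V (Suc t) F b) t (add_mset a (add_mset b G)) a =
      pa * ea + (pa + qa) * (pb * eb) + value_after_pair V a b G"
    unfolding query_value_def[of "\<lambda>F. query_value V (Suc t) F b"] value_after_pair_def
    using infected healthy
    by (simp add: pa_def qa_def pb_def qb_def ea_def I_def Ja_def Jb_def algebra_simps)
  also have "\<dots> = ennreal (reward a t + reward b (Suc t)) + value_after_pair V a b G"
    unfolding \<open>pa + qa = 1\<close> mult_1_left unfolding pa_def pb_def ea_def eb_def reward_def
    by (simp add: ennreal_mult' infp_nonneg)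
  finally show ?thesis .
qed

lemma greedy_interchange:
  assumes greedy_next: "\<And>F'. F' \<noteq> {#} \<Longrightarrow> \<forall>x\<in>#F'. x \<le> T \<Longrightarrow>
      U F' = query_value V (Suc t) F' (Max_mset F')"
    and query_next_le: "\<And>F' h'. h' \<in># F' \<Longrightarrow> query_value V (Suc t) F' h' \<le> U F'"
    and bounded: "\<forall>x\<in>#F. x \<le> T" and "h \<in># F"
  shows "query_value U t F h \<le> query_value U t F (Max_mset F)"
proof (cases "h = Max_mset F")
  case True
  then show ?thesis by simp
next
  case False
  define m where "m = Max_mset F"
  have "m \<in># F" "h \<le> m"
    using \<open>h \<in># F\<close> unfolding m_def by (auto intro: Max_in)
  then have "m \<in># F - {#h#}"
    using False by (simp add: m_def in_diff_count)
  then obtain G where F: "F = add_mset h (add_mset m G)"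
    using \<open>h \<in># F\<close> by (metis insert_DiffM)
  have "h \<le> T" "m \<le> T"
    using bounded \<open>m \<in># F\<close> \<open>h \<in># F\<close> by auto
  have "\<forall>x\<in>#G. x \<le> m \<and> x \<le> T"
  proof
    fix x assume "x \<in># G"
    then have "x \<in># F"
      by (simp add: F)
    then show "x \<le> m \<and> x \<le> T"
      using bounded by (simp add: m_def)
  qed
  have greedy_after_h: "U (add_mset m (G + C)) = query_value V (Suc t) (add_mset m (G + C)) m"
    if "\<forall>x\<in>#C. x \<le> m" for C
  proof -
    have "Max_mset (add_mset m (G + C)) = m"
      using that \<open>\<forall>x\<in>#G. x \<le> m \<and> x \<le> T\<close> by (intro Max_eqI) auto
    moreover have "\<forall>x\<in>#add_mset m (G + C). x \<le> T"
      using that \<open>m \<le> T\<close> \<open>\<forall>x\<in>#G. x \<le> m \<and> x \<le> T\<close> by (auto intro: order_trans)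
    ultimately show ?thesis
      using greedy_next[of "add_mset m (G + C)"] by simp
  qed
  have "query_value U t F h = query_value (\<lambda>F'. query_value V (Suc t) F' m) t F h"
  proof (rule query_value_cong)
    show "U (F - {#h#}) = query_value V (Suc t) (F - {#h#}) m"
      using greedy_after_h[of "{#}"] by (simp add: F)
    fix C assume "C \<in> set_pmf (kids D h)"
    then have "\<forall>x\<in>#C. x \<le> m"
      using set_pmf_kids_less \<open>h \<le> m\<close> by fastforce
    then show "U (F - {#h#} + C) = query_value V (Suc t) (F - {#h#} + C) m"
      using greedy_after_h by (simp add: F)
  qed
  also have "\<dots> = ennreal (reward h t + reward m (Suc t)) + value_after_pair V h m G"
    unfolding F by (rule query_value_pair[OF \<open>h \<le> T\<close>])
  also have "\<dots> \<le> ennreal (reward m t + reward h (Suc t)) + value_after_pair V m h G"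
    unfolding value_after_pair_commute[of V h]
    by (intro add_mono ennreal_leI reward_interchange \<open>h \<le> m\<close> order_refl)
  also have "\<dots> = query_value (\<lambda>F'. query_value V (Suc t) F' h) t F m"
    unfolding F add_mset_commute[of h] by (rule query_value_pair[OF \<open>m \<le> T\<close>, symmetric])
  also have "\<dots> \<le> query_value U t F m"
    by (rule query_value_mono) (simp_all add: F query_next_le)
  finally show ?thesis
    unfolding m_def .
qed

lemma opt_value_Suc_eq_query_value:
  assumes "F \<noteq> {#}"
    and "\<And>h. h \<in># F \<Longrightarrow> query_value (opt_value N (Suc t)) t F h \<le> query_value (opt_value N (Suc t)) t F k"
    and "k \<in># F"
  shows "opt_value (Suc N) t F = query_value (opt_value N (Suc t)) t F k"
  using assms by (auto intro: Max_eqI)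

lemma opt_value_Suc_greedy:
  assumes "F \<noteq> {#}" and "\<forall>x\<in>#F. x \<le> T"
  shows "opt_value (Suc N) t F = query_value (opt_value N (Suc t)) t F (Max_mset F)"
  using assms
proof (induction N arbitrary: t F)
  case 0
  have "opt_value 0 (Suc t) = (\<lambda>_. 0)"
    by (simp add: fun_eq_iff)
  then show ?case
    using 0 by (intro opt_value_Suc_eq_query_value) (auto simp: query_value_zero intro!: ennreal_leI reward_mono)
next
  case (Suc N)
  then show ?case
    by (intro opt_value_Suc_eq_query_value greedy_interchange query_value_le_opt_value) auto
qed

lemma val_greedy_eq_opt_value:
  assumes "\<forall>x\<in>#F. x \<le> T"
  shows "val \<alpha> \<beta> pT T D greedy F0 N H F = opt_value N (length H) F"
  using assms
proof (induction N arbitrary: H F)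
  case 0
  then show ?case by simp
next
  case (Suc N)
  show ?case
  proof (cases "F = {#}")
    case True
    then show ?thesis by simp
  next
    case False
    define m where "m = Max_mset F"
    have "m \<in># F" "m \<le> T"
      using False Suc.prems unfolding m_def by (auto intro: Max_in)
    have bounded_after: "\<forall>x\<in>#F - {#m#} + C. x \<le> T" if "C \<in> set_pmf (kids D m) \<or> C = {#}" for C
      using that Suc.prems set_pmf_kids_less[of C D m] \<open>m \<le> T\<close> by (fastforce dest: in_diffD)
    have "(\<integral>\<^sup>+C. val \<alpha> \<beta> pT T D greedy F0 N (H @ [(m, Some C)]) (F - {#m#} + C) \<partial>measure_pmf (kids D m)) =
        (\<integral>\<^sup>+C. opt_value N (Suc (length H)) (F - {#m#} + C) \<partial>measure_pmf (kids D m))"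
      using Suc.IH[OF bounded_after] by (intro nn_integral_cong_AE) (simp add: AE_measure_pmf_iff)
    moreover have "qchoice (greedy F0 H F) F = m"
      by (simp add: qchoice_def greedy_def m_def)
    ultimately have "val \<alpha> \<beta> pT T D greedy F0 (Suc N) H F =
        query_value (opt_value N (Suc (length H))) (length H) F m"
      using False Suc.IH[OF bounded_after[of "{#}"]] by (simp add: query_value_def Let_def)
    also have "\<dots> = opt_value (Suc N) (length H) F"
      unfolding m_def using False Suc.prems by (rule opt_value_Suc_greedy[symmetric])
    finally show ?thesis .
  qed
qed

end

theorem theorem6p5:
  fixes \<alpha> \<beta> pT :: real and T :: nat and D :: "nat pmf"
  assumes "\<alpha> > \<beta>" and "\<beta> > 0" and "0 < pT" and "pT \<le> 1"
  shows "optimal \<alpha> \<beta> pT T D greedy"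
proof -
  interpret contact_tracing \<alpha> \<beta> pT T D
    using assms by unfold_locales
  show ?thesis
    unfolding optimal_def
  proof (intro allI impI)
    fix F0 :: "nat multiset" and pol
    assume "\<forall>h\<in>#F0. h \<le> T"
    have "total \<alpha> \<beta> pT T D pol F0 \<le> (SUP N. opt_value N 0 F0)"
      unfolding total_def using val_le_opt_value[of pol F0 _ "[]" F0] by (intro SUP_mono) auto
    also have "\<dots> = total \<alpha> \<beta> pT T D greedy F0"
      unfolding total_def using val_greedy_eq_opt_value[OF \<open>\<forall>h\<in>#F0. h \<le> T\<close>, of F0 _ "[]"] by simp
    finally show "total \<alpha> \<beta> pT T D pol F0 \<le> total \<alpha> \<beta> pT T D greedy F0" .
  qed
qed

end
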